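(* Let $\alpha\in(0,1)$, $R>0$, and let $V(\lambda)$ be the maximal Phase-II observation time when at the contact time $t_2$ the target is on the boundary of the observation disk with relative bearing $\lambda\in[-\pi,\pi]$. Then $V(\lambda)=0$ whenever $\lambda\in[\cos^{-1}(-\alpha),\pi]\cup[-\pi,-\cos^{-1}(-\alpha)]$.
   Context: Target: position $(0,y_T(t))$, $\dot y_T=1$. Observer: position $(x_O(t),y_O(t))$, $\dot x_O=\alpha\cos\psi(t)$, $\dot y_O=\alpha\sin\psi(t)$, heading $\psi$ a measurable control. Contact with bearing $\lambda$ at time $t_2$ means $\big(x_O(t_2),y_O(t_2)-y_T(t_2)\big)=R(\sin\lambda,\cos\lambda)$. For a control on $[t_2,\infty)$, $t_f=\inf\{t\ge t_2: x_O(t)^2+(y_O(t)-y_T(t))^2>R^2\}$ and the observation time is $t_f-t_2$; $V(\lambda)$ is the supremum of $t_f-t_2$ over all controls. *)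

theory Defs
  imports "HOL-Analysis.Analysis"
begin

text \<open>Contact at time t2, target at (0, yT t) with yT t2 = y0 and
  unit speed in the y direction.
  At t2 the relative position is R (sin lam, cos lam).\<close>

definition target_y :: "real \<Rightarrow> real \<Rightarrow> real \<Rightarrow> real" where
  "target_y t2 y0 t = y0 + (t - t2)"

definition observer_x :: "real \<Rightarrow> real \<Rightarrow> real \<Rightarrow> (real \<Rightarrow> real) \<Rightarrow> real \<Rightarrow> real \<Rightarrow> real" where
  "observer_x \<alpha> R lam \<psi> t2 t = R * sin lam + integral {t2..t} (\<lambda>s. \<alpha> * cos (\<psi> s))"

definition observer_y :: "real \<Rightarrow> real \<Rightarrow> real \<Rightarrow> (real \<Rightarrow> real) \<Rightarrow> real \<Rightarrow> real \<Rightarrow> real \<Rightarrow> real" where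
  "observer_y \<alpha> R lam \<psi> t2 y0 t =
     y0 + R * cos lam + integral {t2..t} (\<lambda>s. \<alpha> * sin (\<psi> s))"

definition exit_time :: "real \<Rightarrow> real \<Rightarrow> real \<Rightarrow> (real \<Rightarrow> real) \<Rightarrow> real \<Rightarrow> real \<Rightarrow> ereal" where
  "exit_time \<alpha> R lam \<psi> t2 y0 =
     (let S = {t. t \<ge> t2 \<and> (observer_x \<alpha> R lam \<psi> t2 t)\<^sup>2
                 + (observer_y \<alpha> R lam \<psi> t2 y0 t - target_y t2 y0 t)\<^sup>2 > R\<^sup>2}
      in if S = {} then \<infinity> else ereal (Inf S))"

definition max_obs_time :: "real \<Rightarrow> real \<Rightarrow> real \<Rightarrow> real \<Rightarrow> real \<Rightarrow> ereal" where
  "max_obs_time \<alpha> R t2 y0 lam =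
     (SUP \<psi> \<in> {\<psi>. \<psi> \<in> borel_measurable lebesgue}. exit_time \<alpha> R lam \<psi> t2 y0 - ereal t2)"

end

theory Submission
  imports Defs
begin

text \<open>Relative to the target, the observer sits at \<open>R u + d - (0, h)\<close> at time \<open>t2 + h\<close>,
  where \<open>u = (sin lam, cos lam)\<close> and \<open>d\<close> is the observer's displacement. Expanding,
  \<open>|R u + d - (0, h)|\<^sup>2 = R\<^sup>2 + 2R (u \<bullet> d - h cos lam) + |d - (0, h)|\<^sup>2\<close>.
  Since the speed is \<open>\<alpha>\<close>, \<open>u \<bullet> d \<ge> -\<alpha> h \<ge> h cos lam\<close> for \<open>cos lam \<le> -\<alpha>\<close>, and the second
  component of \<open>d\<close> is at most \<open>\<alpha> h < h\<close>. So the distance exceeds \<open>R\<close> at every time after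
  the contact: the target is lost immediately, whatever the control.\<close>

lemma measurable_bounded_integrable_on_interval:
  fixes f :: "real \<Rightarrow> real"
  assumes "f \<in> borel_measurable lebesgue" "\<And>x. \<bar>f x\<bar> \<le> B"
  shows "f integrable_on {a..b}"
proof (rule measurable_bounded_by_integrable_imp_integrable_real)
  show "f \<in> borel_measurable (lebesgue_on {a..b})"
    using assms(1) by (simp add: measurable_restrict_space1)
qed (use assms(2) in auto)

lemma heading_displacement_projection_ge:
  fixes \<psi> :: "real \<Rightarrow> real"
  assumes "\<psi> \<in> borel_measurable lebesgue" "t2 \<le> t" "0 \<le> \<alpha>"
  shows "sin lam * integral {t2..t} (\<lambda>s. \<alpha> * cos (\<psi> s))
           + cos lam * integral {t2..t} (\<lambda>s. \<alpha> * sin (\<psi> s)) \<ge> - \<alpha> * (t - t2)"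
proof -
  have "(\<lambda>s. \<alpha> * cos (\<psi> s)) integrable_on {t2..t}"
    by (rule measurable_bounded_integrable_on_interval[where B = "\<bar>\<alpha>\<bar>"])
      (use assms(1) in \<open>measurable, simp add: abs_mult mult_left_le\<close>)
  moreover have "(\<lambda>s. \<alpha> * sin (\<psi> s)) integrable_on {t2..t}"
    by (rule measurable_bounded_integrable_on_interval[where B = "\<bar>\<alpha>\<bar>"])
      (use assms(1) in \<open>measurable, simp add: abs_mult mult_left_le\<close>)
  ultimately have sum: "((\<lambda>s. sin lam * (\<alpha> * cos (\<psi> s)) + cos lam * (\<alpha> * sin (\<psi> s))) has_integral
      sin lam * integral {t2..t} (\<lambda>s. \<alpha> * cos (\<psi> s))
        + cos lam * integral {t2..t} (\<lambda>s. \<alpha> * sin (\<psi> s))) {t2..t}"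
    by (intro has_integral_add has_integral_mult_right integrable_integral)
  have const: "((\<lambda>s. - \<alpha>) has_integral - \<alpha> * (t - t2)) {t2..t}"
    using has_integral_const_real[of "- \<alpha>" t2 t] assms(2) by (simp add: mult.commute)
  have "- \<alpha> \<le> sin lam * (\<alpha> * cos (\<psi> s)) + cos lam * (\<alpha> * sin (\<psi> s))" for s
  proof -
    have "- \<alpha> \<le> \<alpha> * sin (lam + \<psi> s)"
      using mult_left_mono[OF sin_ge_minus_one assms(3)] by simp
    then show ?thesis by (simp add: sin_add algebra_simps)
  qed
  then show ?thesis
    using has_integral_le[OF const sum] by blast
qed

lemma cos_le_of_arccos_le_abs:
  assumes "-1 \<le> c" "c \<le> 1" "lam \<in> {arccos c..pi} \<union> {-pi..-arccos c}"
  shows "cos lam \<le> c"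
proof -
  have "arccos c \<le> \<bar>lam\<bar>" "\<bar>lam\<bar> \<le> pi"
    using assms arccos_lbound[of c] by auto
  then have "cos \<bar>lam\<bar> \<le> cos (arccos c)"
    using arccos_lbound assms(1,2) by (intro cos_monotone_0_pi_le) auto
  then show ?thesis
    using assms(1,2) by simp
qed

lemma relative_distance_gt_after_contact:
  fixes \<psi> :: "real \<Rightarrow> real"
  assumes "0 \<le> \<alpha>" "\<alpha> < 1" "R > 0" "cos lam \<le> - \<alpha>" "t2 < t"
    and "\<psi> \<in> borel_measurable lebesgue"
  shows "(observer_x \<alpha> R lam \<psi> t2 t)\<^sup>2
           + (observer_y \<alpha> R lam \<psi> t2 y0 t - target_y t2 y0 t)\<^sup>2 > R\<^sup>2"
proof -
  define h where "h = t - t2"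
  define a where "a = integral {t2..t} (\<lambda>s. \<alpha> * cos (\<psi> s))"
  define b where "b = integral {t2..t} (\<lambda>s. \<alpha> * sin (\<psi> s))"
  have "h > 0"
    using assms(5) by (simp add: h_def)
  have along_contact_bearing: "sin lam * a + cos lam * b \<ge> - \<alpha> * h"
    using heading_displacement_projection_ge[OF assms(6)] assms(1,5)
    unfolding a_def b_def h_def by simp
  have "- b \<ge> - \<alpha> * h" \<comment> \<open>bearing \<open>pi\<close>, i.e. the direction \<open>(0, -1)\<close>\<close>
    using heading_displacement_projection_ge[OF assms(6), of t2 t \<alpha> pi] assms(1,5)
    unfolding b_def h_def by simp
  moreover have "\<alpha> * h < h"
    using \<open>h > 0\<close> assms(2) by simp
  ultimately have "(h - b)\<^sup>2 > 0"
    by simp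
  have "cos lam * h \<le> - \<alpha> * h"
    using mult_right_mono[OF assms(4)] \<open>h > 0\<close> by simp
  with along_contact_bearing assms(3)
  have "2 * R * (sin lam * a + cos lam * b - cos lam * h) \<ge> 0"
    by simp
  moreover have "(R * sin lam + a)\<^sup>2 + (R * cos lam + b - h)\<^sup>2
      = R\<^sup>2 * ((sin lam)\<^sup>2 + (cos lam)\<^sup>2) + 2 * R * (sin lam * a + cos lam * b - cos lam * h)
        + a\<^sup>2 + (h - b)\<^sup>2"
    by algebra
  moreover have "observer_x \<alpha> R lam \<psi> t2 t = R * sin lam + a"
    by (simp add: observer_x_def a_def)
  moreover have "observer_y \<alpha> R lam \<psi> t2 y0 t - target_y t2 y0 t = R * cos lam + b - h"
    by (simp add: observer_y_def target_y_def b_def h_def)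
  ultimately show ?thesis
    using \<open>(h - b)\<^sup>2 > 0\<close> zero_le_power2[of a] by (simp only: sin_cos_squared_add mult_1_right)
qed

lemma exit_time_eq_contact_time:
  fixes \<psi> :: "real \<Rightarrow> real"
  assumes "0 \<le> \<alpha>" "\<alpha> < 1" "R > 0" "cos lam \<le> - \<alpha>"
    and "\<psi> \<in> borel_measurable lebesgue"
  shows "exit_time \<alpha> R lam \<psi> t2 y0 = ereal t2"
proof -
  have at_contact: "(observer_x \<alpha> R lam \<psi> t2 t2)\<^sup>2
      + (observer_y \<alpha> R lam \<psi> t2 y0 t2 - target_y t2 y0 t2)\<^sup>2 = R\<^sup>2"
    by (simp add: observer_x_def observer_y_def target_y_def power_mult_distrib
        flip: distrib_left)
  have "{t. t \<ge> t2 \<and> (observer_x \<alpha> R lam \<psi> t2 t)\<^sup>2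
             + (observer_y \<alpha> R lam \<psi> t2 y0 t - target_y t2 y0 t)\<^sup>2 > R\<^sup>2} = {t2<..}"
    using relative_distance_gt_after_contact[OF assms(1-4) _ assms(5)] at_contact
    by (force simp: order_le_less)
  then show ?thesis
    unfolding exit_time_def Let_def by simp
qed

theorem lemma4:
  fixes \<alpha> R lam t2 y0 :: real
  assumes "0 < \<alpha>" "\<alpha> < 1" "R > 0"
    and "lam \<in> {arccos (-\<alpha>)..pi} \<union> {-pi..-arccos (-\<alpha>)}"
  shows "max_obs_time \<alpha> R t2 y0 lam = 0"
proof -
  have "cos lam \<le> - \<alpha>"
    using cos_le_of_arccos_le_abs assms by auto
  then have "exit_time \<alpha> R lam \<psi> t2 y0 - ereal t2 = 0"
    if "\<psi> \<in> borel_measurable lebesgue" for \<psi>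
    using exit_time_eq_contact_time[OF _ assms(2,3) _ that] assms(1) by simp
  then have "max_obs_time \<alpha> R t2 y0 lam
      = (SUP \<psi> \<in> {\<psi>::real \<Rightarrow> real. \<psi> \<in> borel_measurable lebesgue}. 0)"
    unfolding max_obs_time_def by (intro SUP_cong) auto
  also have "\<dots> = 0"
    by (rule SUP_const) (auto intro: exI[of _ "\<lambda>_. 0"])
  finally show ?thesis .
qed

end
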